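(* Let $\mathbb F_q$ be a finite field, and let $B_1 \subseteq \mathbb F_q^{m_1}$ and $B_2 \subseteq \mathbb F_q^{m_2}$. Suppose $B_1$ is $C_1$-weakly Sidorenko and $B_2$ is $C_2$-weakly Sidorenko. Then $B_1 \times B_2 := \{(x,y) \in \mathbb F_q^{m_1+m_2} : x \in B_1, y \in B_2\}$ is $C_1C_2$-weakly Sidorenko. In particular, if $B_1$ and $B_2$ are both Sidorenko, then so is $B_1 \times B_2$.
   Context: An affine relation on elements $x_1,\ldots,x_k$ of $\mathbb F_q^n$ is an equation $\sum_i \lambda_i x_i = 0$ with $\lambda_i \in \mathbb F_q$ and $\sum_i \lambda_i = 0$; it is nontrivial if some $\lambda_i \neq 0$. A set is affinely independent if it has no nontrivial affine relation; the affine rank $\mathrm{rank}_{\mathrm{aff}}(B)$ of $B \subseteq \mathbb F_q^m$ is the size of a maximal affinely independent subset of $B$. For $B \subseteq \mathbb F_q^m$ and $A \subseteq \mathbb F_q^n$, an affine homomorphism $B \to A$ is a map $\varphi: B \to A$ that extends to an affine map $\mathbb F_q^m \to \mathbb F_q^n$ (equivalently, preserves all affine relations); $\mathrm{hom}_{\mathrm{aff}}(B,A)$ denotes the number of affine homomorphisms $B \to A$. For a real $C$, $B \subseteq \mathbb F_q^m$ is called $C$-weakly Sidorenko if for every $n$ and every $A \subseteq \mathbb F_q^n$ with $|A| = \alpha N$, where $N = q^n$, we have $\mathrm{hom}_{\mathrm{aff}}(B,A) \geq \alpha^C N^{\mathrm{rank}_{\mathrm{aff}}(B)}$. $B$ is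 called Sidorenko if it is $|B|$-weakly Sidorenko. *)

theory Defs
  imports Complex_Main "HOL-Library.FuncSet"
begin

text \<open>Vectors in F_q^n are represented as functions nat => 'a vanishing from index n on.\<close>
definition vecs :: "nat \<Rightarrow> (nat \<Rightarrow> 'a::field) set" where
  "vecs n = {x. \<forall>i\<ge>n. x i = 0}"

definition aff_indep :: "(nat \<Rightarrow> 'a::field) set \<Rightarrow> bool" where
  "aff_indep S \<longleftrightarrow> finite S \<and>
     (\<forall>l :: (nat \<Rightarrow> 'a) \<Rightarrow> 'a.
        (\<Sum>x\<in>S. l x) = 0 \<and> (\<forall>i. (\<Sum>x\<in>S. l x * x i) = 0) \<longrightarrow> (\<forall>x\<in>S. l x = 0))"

text \<open>Affine rank: size of a maximal (= maximum-size, all maximal ones have equal size)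
  affinely independent subset.\<close>
definition rank_aff :: "(nat \<Rightarrow> 'a::field) set \<Rightarrow> nat" where
  "rank_aff B = Max (card ` {S. S \<subseteq> B \<and> aff_indep S})"

definition affine_map :: "nat \<Rightarrow> nat \<Rightarrow> ((nat \<Rightarrow> 'a::field) \<Rightarrow> (nat \<Rightarrow> 'a)) \<Rightarrow> bool" where
  "affine_map m n f \<longleftrightarrow> (\<exists>c v. c \<in> vecs n \<and> (\<forall>i<m. v i \<in> vecs n) \<and>
      (\<forall>x\<in>vecs m. f x = (\<lambda>j. c j + (\<Sum>i<m. x i * v i j))))"

definition hom_aff :: "nat \<Rightarrow> nat \<Rightarrow> (nat \<Rightarrow> 'a::field) set \<Rightarrow> (nat \<Rightarrow> 'a) set \<Rightarrow> nat" where
  "hom_aff m n B A = card {\<phi> \<in> B \<rightarrow>\<^sub>E A. \<exists>f. affine_map m n f \<and> (\<forall>x\<in>B. \<phi> x = f x)}"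

definition weakly_sidorenko :: "real \<Rightarrow> nat \<Rightarrow> (nat \<Rightarrow> 'a::{finite,field}) set \<Rightarrow> bool" where
  "weakly_sidorenko C m B \<longleftrightarrow>
     (\<forall>n (A :: (nat \<Rightarrow> 'a) set). A \<subseteq> vecs n \<longrightarrow>
        (let N = real (card (UNIV :: 'a set)) ^ n; \<alpha> = real (card A) / N in
         real (hom_aff m n B A) \<ge> \<alpha> powr C * N ^ rank_aff B))"

definition sidorenko :: "nat \<Rightarrow> (nat \<Rightarrow> 'a::{finite,field}) set \<Rightarrow> bool" where
  "sidorenko m B \<longleftrightarrow> weakly_sidorenko (real (card B)) m B"

definition prod_set :: "nat \<Rightarrow> (nat \<Rightarrow> 'a::field) set \<Rightarrow> (nat \<Rightarrow> 'a) set \<Rightarrow> (nat \<Rightarrow> 'a) set" where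
  "prod_set m1 B1 B2 = (\<lambda>(x, y). (\<lambda>i. if i < m1 then x i else y (i - m1))) ` (B1 \<times> B2)"

end

theory Submission
  imports Defs "HOL-Analysis.Convex" "HOL-Library.Function_Algebras"
begin

(* Fix x0 in B1 and y0 in B2. An affine homomorphism Phi from B1 x B2 to A is the same thing as a
   pair (delta, psi): delta = Phi(-, y0) - Phi(x0, y0) is an affine map on B1 vanishing at x0, and
   psi = Phi(x0, -) is an affine homomorphism from B2 into A_delta = {a. a + delta(B1) \<subseteq> A};
   the inverse glues the pair to Phi(x, y) = delta x + psi y. Hence
   hom(B1 x B2, A) = sum over delta of hom(B2, A_delta), and in the same way
   hom(B1, A) = sum over delta of |A_delta|. There are at most N^(rank B1 - 1) maps delta, as they are
   determined by their values on an affine basis of B1 through x0. Bounding each hom(B2, A_delta)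
   by the hypothesis on B2 and applying Jensen's inequality to t \<mapsto> t^C2 (note C2 \<ge> rank B2 \<ge> 1)
   gives hom(B1 x B2, A) \<ge> alpha^(C1 C2) N^(rank B1 + rank B2 - 1), and the rank of B1 x B2 is at
   most rank B1 + rank B2 - 1. *)

lemma vecs_add: "x \<in> vecs n \<Longrightarrow> y \<in> vecs n \<Longrightarrow> x + y \<in> vecs n"
  and vecs_uminus: "x \<in> vecs n \<Longrightarrow> - x \<in> vecs n"
  and zero_in_vecs: "0 \<in> vecs n"
  by (simp_all add: vecs_def)

lemma bij_betw_restrict_vecs:
  "bij_betw (\<lambda>x. restrict x {..<n}) (vecs n) ({..<n} \<rightarrow>\<^sub>E (UNIV :: 'a::field set))"
proof (rule bij_betw_byWitness[where f' = "\<lambda>f i. if i < n then f i else 0"])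
  show "\<forall>x\<in>vecs n. (\<lambda>i. if i < n then restrict x {..<n} i else 0) = x"
    by (auto simp: vecs_def fun_eq_iff)
  show "\<forall>f\<in>{..<n} \<rightarrow>\<^sub>E UNIV. restrict (\<lambda>i. if i < n then f i else (0::'a)) {..<n} = f"
    by (auto simp: fun_eq_iff PiE_def extensional_def)
  show "(\<lambda>x. restrict x {..<n}) ` vecs n \<subseteq> {..<n} \<rightarrow>\<^sub>E UNIV"
    by (rule image_subsetI, subst restrict_PiE_iff, blast)
  show "(\<lambda>f i. if i < n then f i else 0) ` ({..<n} \<rightarrow>\<^sub>E UNIV) \<subseteq> vecs n"
    by (rule image_subsetI) (simp add: vecs_def)
qed

lemma finite_vecs: "finite (vecs n :: (nat \<Rightarrow> 'a::{finite,field}) set)"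
  using bij_betw_finite[OF bij_betw_restrict_vecs[where 'a = 'a]] by (simp add: finite_PiE)

lemma finite_subset_vecs:
  assumes "B \<subseteq> vecs m"
  shows "finite (B :: (nat \<Rightarrow> 'a::{finite,field}) set)"
  using assms finite_vecs by (rule finite_subset)

lemma card_vecs: "card (vecs n :: (nat \<Rightarrow> 'a::{finite,field}) set) = card (UNIV :: 'a set) ^ n"
  using bij_betw_same_card[OF bij_betw_restrict_vecs[where 'a = 'a]] by (simp add: card_PiE)

lemma one_less_card_field: "1 < card (UNIV :: 'a::{finite,field} set)"
proof -
  have "card {0::'a, 1} \<le> card (UNIV :: 'a set)"
    by (rule card_mono) simp_all
  then show ?thesis
    by simp
qed

lemma one_le_card_field_power: "1 \<le> real (card (UNIV :: 'a::{finite,field} set)) ^ n"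
  using one_less_card_field[where 'a = 'a] by simp

definition affine_fun :: "(nat \<Rightarrow> 'a::field) \<Rightarrow> (nat \<Rightarrow> nat \<Rightarrow> 'a) \<Rightarrow> nat \<Rightarrow> (nat \<Rightarrow> 'a) \<Rightarrow> nat \<Rightarrow> 'a"
  where "affine_fun c v m x = (\<lambda>j. c j + (\<Sum>i<m. x i * v i j))"

definition affine_on :: "nat \<Rightarrow> nat \<Rightarrow> (nat \<Rightarrow> 'a::field) set \<Rightarrow> ((nat \<Rightarrow> 'a) \<Rightarrow> nat \<Rightarrow> 'a) \<Rightarrow> bool"
  where "affine_on m n B \<phi> \<longleftrightarrow>
    (\<exists>c v. c \<in> vecs n \<and> (\<forall>i<m. v i \<in> vecs n) \<and> (\<forall>x\<in>B. \<phi> x = affine_fun c v m x))"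

definition aff_homs :: "nat \<Rightarrow> nat \<Rightarrow> (nat \<Rightarrow> 'a::field) set \<Rightarrow> (nat \<Rightarrow> 'a) set \<Rightarrow> ((nat \<Rightarrow> 'a) \<Rightarrow> nat \<Rightarrow> 'a) set"
  where "aff_homs m n B A = {\<phi> \<in> B \<rightarrow>\<^sub>E A. affine_on m n B \<phi>}"

lemma hom_aff_eq_card_aff_homs:
  assumes "B \<subseteq> vecs m"
  shows "hom_aff m n B A = card (aff_homs m n B A)"
proof -
  have "(\<exists>f. affine_map m n f \<and> (\<forall>x\<in>B. \<phi> x = f x)) \<longleftrightarrow> affine_on m n B \<phi>" for \<phi>
  proof
    assume "\<exists>f. affine_map m n f \<and> (\<forall>x\<in>B. \<phi> x = f x)"
    then obtain f c v where cv: "c \<in> vecs n" "\<forall>i<m. v i \<in> vecs n"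
      and f: "\<forall>x\<in>vecs m. f x = affine_fun c v m x" and \<phi>: "\<forall>x\<in>B. \<phi> x = f x"
      unfolding affine_map_def affine_fun_def by blast
    have "\<forall>x\<in>B. \<phi> x = affine_fun c v m x"
      using assms f \<phi> by (simp add: subset_iff)
    with cv show "affine_on m n B \<phi>"
      unfolding affine_on_def by blast
  next
    assume "affine_on m n B \<phi>"
    then obtain c v where cv: "c \<in> vecs n" "\<forall>i<m. v i \<in> vecs n"
      and \<phi>: "\<forall>x\<in>B. \<phi> x = affine_fun c v m x"
      unfolding affine_on_def by blast
    have "affine_map m n (affine_fun c v m)"
      unfolding affine_map_def affine_fun_def using cv by blast
    with \<phi> show "\<exists>f. affine_map m n f \<and> (\<forall>x\<in>B. \<phi> x = f x)"
      by blast
  qed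
  then show ?thesis
    unfolding hom_aff_def aff_homs_def by simp
qed

lemma affine_fun_in_vecs:
  "c \<in> vecs n \<Longrightarrow> \<forall>i<m. v i \<in> vecs n \<Longrightarrow> affine_fun c v m x \<in> vecs n"
  by (simp add: vecs_def affine_fun_def)

lemma affine_on_in_vecs:
  assumes "affine_on m n B \<phi>" "x \<in> B"
  shows "\<phi> x \<in> vecs n"
proof -
  obtain c v where "c \<in> vecs n" "\<forall>i<m. v i \<in> vecs n" "\<forall>x\<in>B. \<phi> x = affine_fun c v m x"
    using assms(1) unfolding affine_on_def by blast
  with assms(2) show ?thesis
    using affine_fun_in_vecs by metis
qed

lemma affine_on_cong:
  "affine_on m n B \<phi> \<Longrightarrow> (\<And>x. x \<in> B \<Longrightarrow> \<phi> x = \<psi> x) \<Longrightarrow> affine_on m n B \<psi>"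
  unfolding affine_on_def by simp

lemma affine_on_const:
  assumes "a \<in> vecs n"
  shows "affine_on m n B (\<lambda>_. a)"
proof -
  have "affine_fun a (\<lambda>_ _. 0) m x = a" for x
    by (simp add: affine_fun_def)
  moreover have "\<forall>i<m. (\<lambda>_ _. 0) i \<in> vecs n"
    by (simp add: vecs_def)
  ultimately show ?thesis
    unfolding affine_on_def using assms by metis
qed

lemma affine_on_add_const:
  assumes "affine_on m n B \<phi>" "a \<in> vecs n"
  shows "affine_on m n B (\<lambda>x. \<phi> x + a)"
proof -
  obtain c v where "c \<in> vecs n" "\<forall>i<m. v i \<in> vecs n" and \<phi>: "\<forall>x\<in>B. \<phi> x = affine_fun c v m x"
    using assms(1) unfolding affine_on_def by blast
  moreover have "c + a \<in> vecs n"
    using \<open>c \<in> vecs n\<close> assms(2) by (rule vecs_add)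
  moreover have "\<phi> x + a = affine_fun (c + a) v m x" if "x \<in> B" for x
    using \<phi> that by (simp add: affine_fun_def fun_eq_iff algebra_simps)
  ultimately show ?thesis
    unfolding affine_on_def by metis
qed

lemma finite_aff_homs:
  assumes "finite B"
  shows "finite (aff_homs m n B A :: ((nat \<Rightarrow> 'a::{finite,field}) \<Rightarrow> _) set)"
proof (rule finite_subset)
  show "aff_homs m n B A \<subseteq> B \<rightarrow>\<^sub>E vecs n"
  proof
    fix \<phi> assume "\<phi> \<in> aff_homs m n B A"
    then have "\<phi> \<in> extensional B" "affine_on m n B \<phi>"
      unfolding aff_homs_def by (auto simp: PiE_iff)
    then show "\<phi> \<in> B \<rightarrow>\<^sub>E vecs n"
      using affine_on_in_vecs by (auto simp: PiE_iff)
  qed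
  show "finite (B \<rightarrow>\<^sub>E (vecs n :: (nat \<Rightarrow> 'a) set))"
    using assms finite_vecs by (rule finite_PiE)
qed

lemma aff_homs_empty: "aff_homs m n {} A = {} \<rightarrow>\<^sub>E A"
proof -
  have "affine_on m n {} \<phi>" for \<phi>
    using affine_on_const[OF zero_in_vecs] by (rule affine_on_cong) simp
  then show ?thesis
    unfolding aff_homs_def by blast
qed

lemma aff_homs_singleton:
  assumes "A \<subseteq> vecs n"
  shows "aff_homs m n {z} A = {z} \<rightarrow>\<^sub>E A"
proof -
  have "affine_on m n {z} \<phi>" if "\<phi> \<in> {z} \<rightarrow>\<^sub>E A" for \<phi>
  proof (rule affine_on_cong[OF affine_on_const])
    show "\<phi> z \<in> vecs n"
      using that assms by blast
  qed simp
  then show ?thesis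
    unfolding aff_homs_def by auto
qed

lemma aff_homs_to_singleton:
  assumes "a \<in> vecs n"
  shows "aff_homs m n B {a} = B \<rightarrow>\<^sub>E {a}"
proof -
  have "affine_on m n B \<phi>" if "\<phi> \<in> B \<rightarrow>\<^sub>E {a}" for \<phi>
    by (rule affine_on_cong[OF affine_on_const[OF assms]]) (use that in \<open>auto simp: PiE_iff\<close>)
  then show ?thesis
    unfolding aff_homs_def by auto
qed

definition weighted_comb :: "(nat \<Rightarrow> 'a::field) set \<Rightarrow> 'a \<Rightarrow> (nat \<Rightarrow> 'a) \<Rightarrow> bool"
  where "weighted_comb W a z \<longleftrightarrow> (\<exists>c. (\<Sum>w\<in>W. c w) = a \<and> (\<forall>i. (\<Sum>w\<in>W. c w * w i) = z i))"

lemma weighted_comb_mem: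
  assumes "finite W" "w \<in> W"
  shows "weighted_comb W 1 w"
  unfolding weighted_comb_def
proof (intro exI[where x = "\<lambda>u. if u = w then 1 else 0"] conjI allI)
  show "(\<Sum>u\<in>W. if u = w then 1 else 0) = (1::'a)"
    using assms by simp
  have "(\<Sum>u\<in>W. (if u = w then 1 else 0) * u i) = (\<Sum>u\<in>W. if u = w then w i else 0)" for i
    by (rule sum.cong) simp_all
  then show "(\<Sum>u\<in>W. (if u = w then 1 else 0) * u i) = w i" for i
    using assms by simp
qed

lemma weighted_comb_nonempty: "weighted_comb W 1 x \<Longrightarrow> W \<noteq> {}"
  by (auto simp: weighted_comb_def)

lemma weighted_comb_lincomb:
  assumes "\<And>s. s \<in> S \<Longrightarrow> weighted_comb W (a s) (z s)"
  shows "weighted_comb W (\<Sum>s\<in>S. k s * a s) (\<lambda>i. \<Sum>s\<in>S. k s * z s i)"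
proof -
  have "\<forall>s\<in>S. \<exists>c. (\<Sum>w\<in>W. c w) = a s \<and> (\<forall>i. (\<Sum>w\<in>W. c w * w i) = z s i)"
    using assms unfolding weighted_comb_def by blast
  then obtain c where c: "\<forall>s\<in>S. (\<Sum>w\<in>W. c s w) = a s \<and> (\<forall>i. (\<Sum>w\<in>W. c s w * w i) = z s i)"
    by (rule bchoice[elim_format]) blast
  show ?thesis
    unfolding weighted_comb_def
  proof (intro exI[where x = "\<lambda>w. \<Sum>s\<in>S. k s * c s w"] conjI allI)
    have "(\<Sum>w\<in>W. \<Sum>s\<in>S. k s * c s w) = (\<Sum>s\<in>S. k s * (\<Sum>w\<in>W. c s w))"
      by (simp add: sum.swap[of _ W] sum_distrib_left)
    also have "\<dots> = (\<Sum>s\<in>S. k s * a s)"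
      using c by simp
    finally show "(\<Sum>w\<in>W. \<Sum>s\<in>S. k s * c s w) = (\<Sum>s\<in>S. k s * a s)" .
    fix i
    have "(\<Sum>w\<in>W. (\<Sum>s\<in>S. k s * c s w) * w i) = (\<Sum>s\<in>S. k s * (\<Sum>w\<in>W. c s w * w i))"
      by (simp add: sum.swap[of _ W] sum_distrib_left sum_distrib_right mult.assoc)
    also have "\<dots> = (\<Sum>s\<in>S. k s * z s i)"
      using c by simp
    finally show "(\<Sum>w\<in>W. (\<Sum>s\<in>S. k s * c s w) * w i) = (\<Sum>s\<in>S. k s * z s i)" .
  qed
qed

lemma weighted_comb_add_diff:
  assumes "weighted_comb W 1 u" "weighted_comb W 1 v" "weighted_comb W 1 w"
  shows "weighted_comb W 1 (u + v - w)"
proof -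
  obtain cu cv cw where
    "(\<Sum>x\<in>W. cu x) = 1" "\<forall>i. (\<Sum>x\<in>W. cu x * x i) = u i"
    "(\<Sum>x\<in>W. cv x) = 1" "\<forall>i. (\<Sum>x\<in>W. cv x * x i) = v i"
    "(\<Sum>x\<in>W. cw x) = 1" "\<forall>i. (\<Sum>x\<in>W. cw x * x i) = w i"
    using assms unfolding weighted_comb_def by blast
  then show ?thesis
    unfolding weighted_comb_def
    by (intro exI[where x = "\<lambda>x. cu x + cv x - cw x"])
      (simp add: sum.distrib sum_subtractf algebra_simps)
qed

lemma weighted_comb_coordinatewise:
  assumes "finite W" "weighted_comb S 1 x"
    and "\<And>s. s \<in> S \<Longrightarrow> (\<lambda>i. if P i then s (\<sigma> i) else k i) \<in> W"
  shows "weighted_comb W 1 (\<lambda>i. if P i then x (\<sigma> i) else k i)"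
proof -
  obtain a where a: "(\<Sum>s\<in>S. a s) = 1" "\<forall>i. (\<Sum>s\<in>S. a s * s i) = x i"
    using assms(2) unfolding weighted_comb_def by blast
  have "weighted_comb W (\<Sum>s\<in>S. a s * 1) (\<lambda>i. \<Sum>s\<in>S. a s * (if P i then s (\<sigma> i) else k i))"
    using weighted_comb_mem[OF assms(1) assms(3)] by (rule weighted_comb_lincomb)
  moreover have "(\<lambda>i. \<Sum>s\<in>S. a s * (if P i then s (\<sigma> i) else k i)) = (\<lambda>i. if P i then x (\<sigma> i) else k i)"
  proof
    fix i
    show "(\<Sum>s\<in>S. a s * (if P i then s (\<sigma> i) else k i)) = (if P i then x (\<sigma> i) else k i)"
      using a by (cases "P i") (simp_all flip: sum_distrib_right)
  qed
  ultimately show ?thesis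
    using a(1) by simp
qed

lemma affine_fun_weighted_comb:
  assumes "(\<Sum>s\<in>S. a s) = 1" "\<And>i. (\<Sum>s\<in>S. a s * s i) = x i"
  shows "affine_fun c v m x j = (\<Sum>s\<in>S. a s * affine_fun c v m s j)"
proof -
  have "(\<Sum>s\<in>S. a s * affine_fun c v m s j) = (\<Sum>s\<in>S. a s) * c j + (\<Sum>i<m. (\<Sum>s\<in>S. a s * s i) * v i j)"
    by (simp add: affine_fun_def distrib_left sum.distrib sum_distrib_left sum_distrib_right
        sum.swap[of _ S] mult.assoc)
  then show ?thesis
    using assms by (simp add: affine_fun_def)
qed

lemma affine_on_eq_on_span:
  assumes "affine_on m n B \<phi>" "affine_on m n B \<psi>" "S \<subseteq> B"
    and span: "\<And>x. x \<in> B \<Longrightarrow> weighted_comb S 1 x" and eq: "\<And>s. s \<in> S \<Longrightarrow> \<phi> s = \<psi> s"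
    and "x \<in> B"
  shows "\<phi> x = \<psi> x"
proof
  fix j
  obtain a where a: "(\<Sum>s\<in>S. a s) = 1" "\<And>i. (\<Sum>s\<in>S. a s * s i) = x i"
    using span[OF \<open>x \<in> B\<close>] unfolding weighted_comb_def by blast
  obtain c v where \<phi>: "\<forall>x\<in>B. \<phi> x = affine_fun c v m x"
    using assms(1) unfolding affine_on_def by blast
  obtain c' v' where \<psi>: "\<forall>x\<in>B. \<psi> x = affine_fun c' v' m x"
    using assms(2) unfolding affine_on_def by blast
  have "\<phi> x j = (\<Sum>s\<in>S. a s * \<phi> s j)"
    using \<phi> \<open>x \<in> B\<close> \<open>S \<subseteq> B\<close> affine_fun_weighted_comb[OF a] by (simp add: subset_iff)
  also have "\<dots> = (\<Sum>s\<in>S. a s * \<psi> s j)"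
    using eq by simp
  also have "\<dots> = \<psi> x j"
    using \<psi> \<open>x \<in> B\<close> \<open>S \<subseteq> B\<close> affine_fun_weighted_comb[OF a] by (simp add: subset_iff)
  finally show "\<phi> x j = \<psi> x j" .
qed

section \<open>Affine rank\<close>

lemma aff_indep_empty: "aff_indep {}"
  by (simp add: aff_indep_def)

lemma aff_indep_finite: "aff_indep S \<Longrightarrow> finite S"
  by (simp add: aff_indep_def)

lemma aff_indepD:
  "aff_indep S \<Longrightarrow> (\<Sum>x\<in>S. l x) = 0 \<Longrightarrow> \<forall>i. (\<Sum>x\<in>S. l x * x i) = 0 \<Longrightarrow> y \<in> S \<Longrightarrow> l y = 0"
  unfolding aff_indep_def by blast

definition weighted_sum :: "(nat \<Rightarrow> 'a::field) set \<Rightarrow> ((nat \<Rightarrow> 'a) \<Rightarrow> 'a) \<Rightarrow> 'a \<times> (nat \<Rightarrow> 'a)"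
  where "weighted_sum S d = ((\<Sum>s\<in>S. d s), (\<lambda>i. \<Sum>s\<in>S. d s * s i))"

lemma inj_on_weighted_sum:
  assumes "aff_indep T"
  shows "inj_on (weighted_sum T) (T \<rightarrow>\<^sub>E UNIV)"
proof (rule inj_onI)
  fix d d' assume d: "d \<in> T \<rightarrow>\<^sub>E UNIV" "d' \<in> T \<rightarrow>\<^sub>E UNIV" and eq: "weighted_sum T d = weighted_sum T d'"
  from eq have "(\<Sum>t\<in>T. d t) = (\<Sum>t\<in>T. d' t)" "\<And>i. (\<Sum>t\<in>T. d t * t i) = (\<Sum>t\<in>T. d' t * t i)"
    by (simp_all add: weighted_sum_def fun_eq_iff)
  then have "(\<Sum>t\<in>T. d t - d' t) = 0" "\<forall>i. (\<Sum>t\<in>T. (d t - d' t) * t i) = 0"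
    by (simp_all add: sum_subtractf left_diff_distrib)
  then have "\<forall>t\<in>T. d t - d' t = 0"
    using aff_indepD[OF assms] by blast
  then show "d = d'"
    by (intro PiE_ext[OF d]) simp
qed

lemma weighted_sum_image_subset:
  assumes "\<And>t. t \<in> T \<Longrightarrow> weighted_comb W 1 t"
  shows "weighted_sum T ` (T \<rightarrow>\<^sub>E UNIV) \<subseteq> weighted_sum W ` (W \<rightarrow>\<^sub>E UNIV)"
proof (rule image_subsetI)
  fix d
  have "weighted_comb W (\<Sum>t\<in>T. d t * 1) (\<lambda>i. \<Sum>t\<in>T. d t * t i)"
    using assms by (rule weighted_comb_lincomb)
  then obtain c where "(\<Sum>w\<in>W. c w) = (\<Sum>t\<in>T. d t * 1)"
    "\<forall>i. (\<Sum>w\<in>W. c w * w i) = (\<Sum>t\<in>T. d t * t i)"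
    unfolding weighted_comb_def by blast
  then have "weighted_sum T d = weighted_sum W (restrict c W)"
    by (simp add: weighted_sum_def fun_eq_iff)
  moreover have "restrict c W \<in> W \<rightarrow>\<^sub>E UNIV"
    by simp
  ultimately show "weighted_sum T d \<in> weighted_sum W ` (W \<rightarrow>\<^sub>E UNIV)"
    by (rule image_eqI)
qed

text \<open>Over a finite field the exchange lemma follows by counting: the q^|T| weight vectors on T
  have distinct weighted sums, all of which are weighted sums of the q^|W| weight vectors on W.\<close>

lemma card_aff_indep_le:
  fixes W T :: "(nat \<Rightarrow> 'a::{finite,field}) set"
  assumes W: "finite W" and T: "aff_indep T" and span: "\<And>t. t \<in> T \<Longrightarrow> weighted_comb W 1 t"
  shows "card T \<le> card W"
proof -
  have "card (T \<rightarrow>\<^sub>E (UNIV :: 'a set)) = card (weighted_sum T ` (T \<rightarrow>\<^sub>E UNIV))"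
    using card_image[OF inj_on_weighted_sum[OF T]] by simp
  also have "\<dots> \<le> card (weighted_sum W ` (W \<rightarrow>\<^sub>E UNIV))"
    using W weighted_sum_image_subset[OF span]
    by (intro card_mono finite_imageI finite_PiE) simp_all
  also have "\<dots> \<le> card (W \<rightarrow>\<^sub>E (UNIV :: 'a set))"
    using W by (intro card_image_le finite_PiE) simp_all
  finally have "card (UNIV :: 'a set) ^ card T \<le> card (UNIV :: 'a set) ^ card W"
    using aff_indep_finite[OF T] W by (simp add: card_PiE)
  then show ?thesis
    using one_less_card_field by (rule power_le_imp_le_exp[rotated])
qed

lemma rank_aff_le:
  fixes B :: "(nat \<Rightarrow> 'a::{finite,field}) set"
  assumes "finite W" "\<And>x. x \<in> B \<Longrightarrow> weighted_comb W 1 x"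
  shows "rank_aff B \<le> card W"
proof -
  let ?K = "card ` {S. S \<subseteq> B \<and> aff_indep S}"
  have bound: "k \<le> card W" if "k \<in> ?K" for k
    using that assms card_aff_indep_le by blast
  then have "finite ?K"
    by (meson atMost_iff finite_atMost finite_subset subsetI)
  moreover have "?K \<noteq> {}"
    using aff_indep_empty by blast
  ultimately show ?thesis
    unfolding rank_aff_def using bound by simp
qed

lemma weighted_comb_if_dependent_insert:
  assumes S: "aff_indep S" and dep: "\<not> aff_indep (insert x S)" and "x \<notin> S"
  shows "weighted_comb S 1 x"
proof -
  have fS: "finite S"
    using S by (rule aff_indep_finite)
  obtain l where l1: "(\<Sum>y\<in>insert x S. l y) = 0" and l2: "\<forall>i. (\<Sum>y\<in>insert x S. l y * y i) = 0"
    and nontriv: "\<exists>y\<in>insert x S. l y \<noteq> 0"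
    using dep fS unfolding aff_indep_def by blast
  have sum_S: "(\<Sum>y\<in>S. l y) = - l x"
    using l1 fS \<open>x \<notin> S\<close> by (simp add: eq_neg_iff_add_eq_0 add.commute)
  have coord_S: "(\<Sum>y\<in>S. l y * y i) = - (l x * x i)" for i
    using l2 fS \<open>x \<notin> S\<close> by (simp add: eq_neg_iff_add_eq_0 add.commute)
  have "l x \<noteq> 0"
  proof
    assume "l x = 0"
    then have "(\<Sum>y\<in>S. l y) = 0" "\<forall>i. (\<Sum>y\<in>S. l y * y i) = 0"
      using sum_S coord_S by simp_all
    then have "\<forall>y\<in>S. l y = 0"
      using aff_indepD[OF S] by blast
    with \<open>l x = 0\<close> nontriv show False
      by blast
  qed
  show ?thesis
    unfolding weighted_comb_def
  proof (intro exI[where x = "\<lambda>y. - l y / l x"] conjI allI)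
    show "(\<Sum>y\<in>S. - l y / l x) = 1"
      using sum_S \<open>l x \<noteq> 0\<close> by (simp add: sum_negf flip: sum_divide_distrib)
    show "(\<Sum>y\<in>S. - l y / l x * y i) = x i" for i
      using coord_S[of i] \<open>l x \<noteq> 0\<close> by (simp add: sum_negf flip: sum_divide_distrib)
  qed
qed

lemma rank_aff_basis:
  fixes B :: "(nat \<Rightarrow> 'a::field) set"
  assumes "finite B"
  obtains S where "S \<subseteq> B" "card S = rank_aff B" "\<And>x. x \<in> B \<Longrightarrow> weighted_comb S 1 x"
proof -
  let ?K = "card ` {S. S \<subseteq> B \<and> aff_indep S}"
  have "finite {S. S \<subseteq> B \<and> aff_indep S}"
    by (rule finite_subset[of _ "Pow B"]) (use assms in auto)
  then have "finite ?K"
    by (rule finite_imageI)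
  moreover have "?K \<noteq> {}"
    using aff_indep_empty by blast
  ultimately have "rank_aff B \<in> ?K" and max: "\<And>k. k \<in> ?K \<Longrightarrow> k \<le> rank_aff B"
    unfolding rank_aff_def by simp_all
  then obtain S where S: "S \<subseteq> B" "aff_indep S" "card S = rank_aff B"
    by (auto simp only: image_iff mem_Collect_eq)
  have fS: "finite S"
    using S(2) by (rule aff_indep_finite)
  have "weighted_comb S 1 x" if "x \<in> B" for x
  proof (cases "x \<in> S")
    case True
    with fS show ?thesis
      by (rule weighted_comb_mem)
  next
    case False
    have "\<not> aff_indep (insert x S)"
    proof
      assume "aff_indep (insert x S)"
      with S(1) \<open>x \<in> B\<close> have "card (insert x S) \<le> rank_aff B"
        by (intro max) blast
      with fS False S(3) show False
        by simp
    qed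
    with S(2) False show ?thesis
      by (intro weighted_comb_if_dependent_insert)
  qed
  with S(1,3) show ?thesis
    by (rule that)
qed

lemma one_le_rank_aff:
  assumes "finite B" "B \<noteq> {}"
  shows "1 \<le> rank_aff B"
proof -
  obtain S where "S \<subseteq> B" "card S = rank_aff B" "\<And>x. x \<in> B \<Longrightarrow> weighted_comb S 1 x"
    using rank_aff_basis[OF assms(1)] by blast
  moreover have "finite S"
    using \<open>S \<subseteq> B\<close> assms(1) by (rule finite_subset)
  ultimately show ?thesis
    using assms(2) weighted_comb_nonempty by (fastforce simp: Suc_le_eq card_gt_0_iff)
qed

lemma rank_aff_empty: "rank_aff ({} :: (nat \<Rightarrow> 'a::{finite,field}) set) = 0"
  using rank_aff_le[of "{}" "{} :: (nat \<Rightarrow> 'a) set"] by simp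

section \<open>Products\<close>

definition join :: "nat \<Rightarrow> (nat \<Rightarrow> 'a) \<Rightarrow> (nat \<Rightarrow> 'a) \<Rightarrow> nat \<Rightarrow> 'a"
  where "join m x y = (\<lambda>i. if i < m then x i else y (i - m))"

definition prefix :: "nat \<Rightarrow> (nat \<Rightarrow> 'a::zero) \<Rightarrow> nat \<Rightarrow> 'a"
  where "prefix m p = (\<lambda>i. if i < m then p i else 0)"

definition suffix :: "nat \<Rightarrow> (nat \<Rightarrow> 'a) \<Rightarrow> nat \<Rightarrow> 'a"
  where "suffix m p = (\<lambda>i. p (m + i))"

lemma prefix_join: "x \<in> vecs m \<Longrightarrow> prefix m (join m x y) = x"
  by (auto simp: prefix_def join_def vecs_def fun_eq_iff)

lemma suffix_join: "suffix m (join m x y) = y"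
  by (simp add: suffix_def join_def)

lemma join_zero: "x \<in> vecs m \<Longrightarrow> join m x 0 = x"
  by (auto simp: join_def vecs_def fun_eq_iff)

lemma join_in_vecs: "x \<in> vecs m1 \<Longrightarrow> y \<in> vecs m2 \<Longrightarrow> join m1 x y \<in> vecs (m1 + m2)"
  by (simp add: vecs_def join_def)

lemma prod_set_eq_image_join: "prod_set m B1 B2 = (\<lambda>(x, y). join m x y) ` (B1 \<times> B2)"
  unfolding prod_set_def join_def ..

lemma join_in_prod_set: "x \<in> B1 \<Longrightarrow> y \<in> B2 \<Longrightarrow> join m x y \<in> prod_set m B1 B2"
  unfolding prod_set_eq_image_join by (rule image_eqI[of _ _ "(x, y)"]) simp_all

lemma prod_setE:
  assumes "p \<in> prod_set m B1 B2"
  obtains x y where "x \<in> B1" "y \<in> B2" "p = join m x y"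
  using assms unfolding prod_set_eq_image_join by auto

lemma prod_set_subset_vecs:
  "B1 \<subseteq> vecs m1 \<Longrightarrow> B2 \<subseteq> vecs m2 \<Longrightarrow> prod_set m1 B1 B2 \<subseteq> vecs (m1 + m2)"
  by (auto elim!: prod_setE intro!: join_in_vecs)

lemma card_prod_set:
  assumes "B1 \<subseteq> vecs m1"
  shows "card (prod_set m1 B1 B2) = card B1 * card B2"
proof -
  have "inj_on (\<lambda>(x, y). join m1 x y) (B1 \<times> B2)"
  proof (rule inj_onI, clarify)
    fix x y x' y' assume "x \<in> B1" "x' \<in> B1" and eq: "join m1 x y = join m1 x' y'"
    then show "x = x' \<and> y = y'"
      using assms prefix_join suffix_join by (metis subsetD)
  qed
  then show ?thesis
    unfolding prod_set_eq_image_join by (simp add: card_image card_cartesian_product)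
qed

lemma sum_lessThan_add:
  fixes m1 m2 :: nat
  shows "(\<Sum>i<m1 + m2. f i) = (\<Sum>i<m1. f i) + (\<Sum>i<m2. f (m1 + i))"
  by (induction m2) (simp_all add: add.assoc)

lemma affine_fun_join:
  "affine_fun c v (m1 + m2) (join m1 x y) = affine_fun c v m1 x + affine_fun 0 (\<lambda>i. v (m1 + i)) m2 y"
  by (simp add: affine_fun_def join_def sum_lessThan_add fun_eq_iff add.assoc)

lemma affine_on_prod_set_iff:
  "affine_on (m1 + m2) n (prod_set m1 B1 B2) \<Phi> \<longleftrightarrow>
    (\<exists>\<delta> \<psi>. affine_on m1 n B1 \<delta> \<and> affine_on m2 n B2 \<psi> \<and>
      (\<forall>x\<in>B1. \<forall>y\<in>B2. \<Phi> (join m1 x y) = \<delta> x + \<psi> y))"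
proof
  assume "affine_on (m1 + m2) n (prod_set m1 B1 B2) \<Phi>"
  then obtain c v where c: "c \<in> vecs n" and v: "\<forall>i<m1 + m2. v i \<in> vecs n"
    and \<Phi>: "\<forall>p\<in>prod_set m1 B1 B2. \<Phi> p = affine_fun c v (m1 + m2) p"
    unfolding affine_on_def by blast
  have "\<forall>i<m1. v i \<in> vecs n" "\<forall>i<m2. v (m1 + i) \<in> vecs n"
    using v by simp_all
  then have "affine_on m1 n B1 (affine_fun c v m1)"
    unfolding affine_on_def using c by (intro exI[where x = c] exI[where x = v]) simp
  moreover have "affine_on m2 n B2 (affine_fun 0 (\<lambda>i. v (m1 + i)) m2)"
    unfolding affine_on_def using \<open>\<forall>i<m2. v (m1 + i) \<in> vecs n\<close> zero_in_vecs
    by (intro exI[where x = 0] exI[where x = "\<lambda>i. v (m1 + i)"]) simp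
  moreover have "\<forall>x\<in>B1. \<forall>y\<in>B2. \<Phi> (join m1 x y) = affine_fun c v m1 x + affine_fun 0 (\<lambda>i. v (m1 + i)) m2 y"
    using \<Phi> join_in_prod_set affine_fun_join by metis
  ultimately show "\<exists>\<delta> \<psi>. affine_on m1 n B1 \<delta> \<and> affine_on m2 n B2 \<psi> \<and>
      (\<forall>x\<in>B1. \<forall>y\<in>B2. \<Phi> (join m1 x y) = \<delta> x + \<psi> y)"
    by blast
next
  assume "\<exists>\<delta> \<psi>. affine_on m1 n B1 \<delta> \<and> affine_on m2 n B2 \<psi> \<and>
      (\<forall>x\<in>B1. \<forall>y\<in>B2. \<Phi> (join m1 x y) = \<delta> x + \<psi> y)"
  then obtain \<delta> \<psi> c1 v1 c2 v2 where cv: "c1 \<in> vecs n" "\<forall>i<m1. v1 i \<in> vecs n" "c2 \<in> vecs n" "\<forall>i<m2. v2 i \<in> vecs n"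
    and \<delta>: "\<forall>x\<in>B1. \<delta> x = affine_fun c1 v1 m1 x" and \<psi>: "\<forall>y\<in>B2. \<psi> y = affine_fun c2 v2 m2 y"
    and \<Phi>: "\<forall>x\<in>B1. \<forall>y\<in>B2. \<Phi> (join m1 x y) = \<delta> x + \<psi> y"
    unfolding affine_on_def by blast
  define v where "v i = (if i < m1 then v1 i else v2 (i - m1))" for i
  have "affine_fun (c1 + c2) v (m1 + m2) (join m1 x y) = affine_fun c1 v1 m1 x + affine_fun c2 v2 m2 y" for x y
    by (simp add: affine_fun_join) (simp add: affine_fun_def v_def fun_eq_iff algebra_simps)
  then have "\<forall>p\<in>prod_set m1 B1 B2. \<Phi> p = affine_fun (c1 + c2) v (m1 + m2) p"
    using \<Phi> \<delta> \<psi> by (auto elim!: prod_setE)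
  moreover have "c1 + c2 \<in> vecs n" "\<forall>i<m1 + m2. v i \<in> vecs n"
    using cv by (auto simp: v_def vecs_add)
  ultimately show "affine_on (m1 + m2) n (prod_set m1 B1 B2) \<Phi>"
    unfolding affine_on_def by blast
qed

lemma weighted_comb_join:
  assumes W: "finite W" and x: "weighted_comb S1 1 x" and y: "weighted_comb S2 1 y" and "x0 \<in> S1"
    and W1: "\<And>s. s \<in> S1 \<Longrightarrow> join m s y0 \<in> W" and W2: "\<And>t. t \<in> S2 \<Longrightarrow> join m x0 t \<in> W"
  shows "weighted_comb W 1 (join m x y)"
proof -
  have "weighted_comb W 1 (\<lambda>i. if i < m then x i else y0 (i - m))"
    using W x by (rule weighted_comb_coordinatewise[where \<sigma> = "\<lambda>i. i"]) (use W1 in \<open>simp add: join_def\<close>)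
  then have comb1: "weighted_comb W 1 (join m x y0)"
    by (simp add: join_def)
  have swap: "(\<lambda>i. if \<not> i < m then t (i - m) else x0 i) = join m x0 t" for t
    by (simp add: join_def fun_eq_iff)
  have "weighted_comb W 1 (\<lambda>i. if \<not> i < m then y (i - m) else x0 i)"
    using W y by (rule weighted_comb_coordinatewise) (simp add: swap W2)
  then have comb2: "weighted_comb W 1 (join m x0 y)"
    by (simp only: swap)
  have "weighted_comb W 1 (join m x0 y0)"
    using W W1[OF \<open>x0 \<in> S1\<close>] by (rule weighted_comb_mem)
  with comb1 comb2 have "weighted_comb W 1 (join m x y0 + join m x0 y - join m x0 y0)"
    by (rule weighted_comb_add_diff)
  moreover have "join m x y0 + join m x0 y - join m x0 y0 = join m x y"
    by (simp add: join_def fun_eq_iff)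
  ultimately show ?thesis
    by simp
qed

lemma card_insert_image_Un_le:
  assumes "finite S1" "finite S2" "x0 \<in> S1" "y0 \<in> S2"
  shows "card (insert z (f ` (S1 - {x0}) \<union> g ` (S2 - {y0}))) \<le> card S1 + card S2 - 1"
proof -
  have "card (insert z (f ` (S1 - {x0}) \<union> g ` (S2 - {y0}))) \<le> Suc (card (f ` (S1 - {x0})) + card (g ` (S2 - {y0})))"
    using assms(1,2) by (simp add: card_insert_le_m1 card_Un_le le_SucI)
  also have "\<dots> \<le> Suc (card (S1 - {x0}) + card (S2 - {y0}))"
    by (simp add: add_mono card_image_le assms(1,2))
  also have "\<dots> = card S1 + card S2 - 1"
    using assms card_gt_0_iff[of S1] card_gt_0_iff[of S2] by auto
  finally show ?thesis .
qed

lemma rank_aff_prod_set_le: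
  fixes B1 B2 :: "(nat \<Rightarrow> 'a::{finite,field}) set"
  assumes "finite B1" "finite B2" "B1 \<noteq> {}" "B2 \<noteq> {}"
  shows "rank_aff (prod_set m1 B1 B2) \<le> rank_aff B1 + rank_aff B2 - 1"
proof -
  obtain S1 where S1: "S1 \<subseteq> B1" "card S1 = rank_aff B1" and span1: "\<And>x. x \<in> B1 \<Longrightarrow> weighted_comb S1 1 x"
    using rank_aff_basis[OF assms(1)] by blast
  obtain S2 where S2: "S2 \<subseteq> B2" "card S2 = rank_aff B2" and span2: "\<And>y. y \<in> B2 \<Longrightarrow> weighted_comb S2 1 y"
    using rank_aff_basis[OF assms(2)] by blast
  have fin: "finite S1" "finite S2"
    using S1(1) S2(1) assms(1,2) finite_subset by blast+
  obtain x0 y0 where x0: "x0 \<in> S1" and y0: "y0 \<in> S2"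
    using assms(3,4) span1 span2 weighted_comb_nonempty by blast
  define W where "W = insert (join m1 x0 y0)
    ((\<lambda>s. join m1 s y0) ` (S1 - {x0}) \<union> (\<lambda>t. join m1 x0 t) ` (S2 - {y0}))"
  have "finite W"
    unfolding W_def using fin by simp
  have card_W: "card W \<le> card S1 + card S2 - 1"
    unfolding W_def using fin x0 y0 by (rule card_insert_image_Un_le)
  have "weighted_comb W 1 p" if p: "p \<in> prod_set m1 B1 B2" for p
  proof -
    obtain x y where "x \<in> B1" "y \<in> B2" "p = join m1 x y"
      using p by (rule prod_setE)
    moreover have "join m1 s y0 \<in> W" if "s \<in> S1" for s
      using that unfolding W_def by blast
    moreover have "join m1 x0 t \<in> W" if "t \<in> S2" for t
      using that unfolding W_def by blast
    ultimately show ?thesis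
      using weighted_comb_join[OF \<open>finite W\<close> span1 span2 x0] by blast
  qed
  then have "rank_aff (prod_set m1 B1 B2) \<le> card W"
    using \<open>finite W\<close> by (intro rank_aff_le)
  with card_W S1(2) S2(2) show ?thesis
    by simp
qed

section \<open>Counting homomorphisms of products\<close>

definition pointed_homs :: "nat \<Rightarrow> nat \<Rightarrow> (nat \<Rightarrow> 'a::field) set \<Rightarrow> (nat \<Rightarrow> 'a) \<Rightarrow> ((nat \<Rightarrow> 'a) \<Rightarrow> nat \<Rightarrow> 'a) set"
  where "pointed_homs m n B x0 = {\<delta> \<in> aff_homs m n B (vecs n). \<delta> x0 = 0}"

definition shifts_into :: "nat \<Rightarrow> (nat \<Rightarrow> 'a::field) set \<Rightarrow> (nat \<Rightarrow> 'a) set \<Rightarrow> (nat \<Rightarrow> 'a) set"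
  where "shifts_into n D A = {a \<in> vecs n. \<forall>d\<in>D. a + d \<in> A}"

lemma shifts_into_subset_vecs: "shifts_into n D A \<subseteq> vecs n"
  by (auto simp: shifts_into_def)

lemma finite_pointed_homs:
  fixes B :: "(nat \<Rightarrow> 'a::{finite,field}) set"
  assumes "finite B"
  shows "finite (pointed_homs m n B x0)"
  unfolding pointed_homs_def by (rule finite_subset[OF _ finite_aff_homs[OF assms]]) blast

lemma restrict_zero_in_pointed_homs:
  assumes "x0 \<in> B"
  shows "(\<lambda>_\<in>B. 0) \<in> pointed_homs m n B x0"
proof -
  have "affine_on m n B (\<lambda>_\<in>B. 0)"
    by (rule affine_on_cong[OF affine_on_const[OF zero_in_vecs]]) simp
  then show ?thesis
    unfolding pointed_homs_def aff_homs_def using assms by (simp add: restrict_PiE_iff Pi_def vecs_def)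
qed

lemma card_pointed_homs_le:
  fixes B :: "(nat \<Rightarrow> 'a::{finite,field}) set"
  assumes S: "S \<subseteq> B" "finite S" "x0 \<in> S" and span: "\<And>x. x \<in> B \<Longrightarrow> weighted_comb S 1 x"
  shows "card (pointed_homs m n B x0) \<le> card (vecs n :: (nat \<Rightarrow> 'a) set) ^ (card S - 1)"
proof -
  have "inj_on (\<lambda>\<delta>. restrict \<delta> (S - {x0})) (pointed_homs m n B x0)"
  proof (rule inj_onI)
    fix \<delta> \<delta>' assume "\<delta> \<in> pointed_homs m n B x0" "\<delta>' \<in> pointed_homs m n B x0"
      and eq: "restrict \<delta> (S - {x0}) = restrict \<delta>' (S - {x0})"
    then have \<delta>: "\<delta> \<in> extensional B" "affine_on m n B \<delta>" "\<delta> x0 = 0"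
      and \<delta>': "\<delta>' \<in> extensional B" "affine_on m n B \<delta>'" "\<delta>' x0 = 0"
      unfolding pointed_homs_def aff_homs_def by (auto simp: PiE_iff)
    have "\<delta> s = \<delta>' s" if "s \<in> S" for s
      using that \<delta>(3) \<delta>'(3) fun_cong[OF eq, of s] by (cases "s = x0") simp_all
    then have "\<delta> x = \<delta>' x" if "x \<in> B" for x
      using affine_on_eq_on_span[OF \<delta>(2) \<delta>'(2) S(1) span] that by blast
    then show "\<delta> = \<delta>'"
      by (rule extensionalityI[OF \<delta>(1) \<delta>'(1)])
  qed
  moreover have "(\<lambda>\<delta>. restrict \<delta> (S - {x0})) ` pointed_homs m n B x0 \<subseteq> (S - {x0}) \<rightarrow>\<^sub>E vecs n"
  proof (rule image_subsetI)
    fix \<delta> assume "\<delta> \<in> pointed_homs m n B x0"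
    then have "\<delta> \<in> B \<rightarrow>\<^sub>E vecs n"
      unfolding pointed_homs_def aff_homs_def by blast
    then show "restrict \<delta> (S - {x0}) \<in> (S - {x0}) \<rightarrow>\<^sub>E vecs n"
      unfolding restrict_PiE_iff using S(1) by (blast intro: PiE_mem)
  qed
  ultimately have "card (pointed_homs m n B x0) \<le> card ((S - {x0}) \<rightarrow>\<^sub>E (vecs n :: (nat \<Rightarrow> 'a) set))"
    using S(2) finite_vecs by (intro card_inj_on_le finite_PiE) simp_all
  then show ?thesis
    using S(2,3) by (simp add: card_PiE)
qed

locale prod_decomposition =
  fixes m1 :: nat and B1 B2 :: "(nat \<Rightarrow> 'a::field) set" and x0 y0 :: "nat \<Rightarrow> 'a"
  assumes B1_vecs: "B1 \<subseteq> vecs m1" and x0: "x0 \<in> B1" and y0: "y0 \<in> B2"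
begin

definition fst_part :: "((nat \<Rightarrow> 'a) \<Rightarrow> nat \<Rightarrow> 'a) \<Rightarrow> (nat \<Rightarrow> 'a) \<Rightarrow> nat \<Rightarrow> 'a"
  where "fst_part \<Phi> = (\<lambda>x\<in>B1. \<Phi> (join m1 x y0) - \<Phi> (join m1 x0 y0))"

definition snd_part :: "((nat \<Rightarrow> 'a) \<Rightarrow> nat \<Rightarrow> 'a) \<Rightarrow> (nat \<Rightarrow> 'a) \<Rightarrow> nat \<Rightarrow> 'a"
  where "snd_part \<Phi> = (\<lambda>y\<in>B2. \<Phi> (join m1 x0 y))"

definition glue :: "((nat \<Rightarrow> 'a) \<Rightarrow> nat \<Rightarrow> 'a) \<Rightarrow> ((nat \<Rightarrow> 'a) \<Rightarrow> nat \<Rightarrow> 'a) \<Rightarrow> (nat \<Rightarrow> 'a) \<Rightarrow> nat \<Rightarrow> 'a"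
  where "glue \<delta> \<psi> = (\<lambda>p\<in>prod_set m1 B1 B2. \<delta> (prefix m1 p) + \<psi> (suffix m1 p))"

lemma glue_join: "x \<in> B1 \<Longrightarrow> y \<in> B2 \<Longrightarrow> glue \<delta> \<psi> (join m1 x y) = \<delta> x + \<psi> y"
  using B1_vecs by (auto simp: glue_def join_in_prod_set prefix_join suffix_join)

lemma affine_on_prod_set_split:
  assumes "affine_on (m1 + m2) n (prod_set m1 B1 B2) \<Phi>" "x \<in> B1" "y \<in> B2"
  shows "\<Phi> (join m1 x y) = fst_part \<Phi> x + snd_part \<Phi> y"
proof -
  obtain \<delta> \<psi> where "\<forall>x\<in>B1. \<forall>y\<in>B2. \<Phi> (join m1 x y) = \<delta> x + \<psi> y"
    using assms(1) unfolding affine_on_prod_set_iff by blast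
  then show ?thesis
    using assms(2,3) x0 y0 by (simp add: fst_part_def snd_part_def)
qed

lemma fst_part_in_pointed_homs:
  assumes "affine_on (m1 + m2) n (prod_set m1 B1 B2) \<Phi>"
  shows "fst_part \<Phi> \<in> pointed_homs m1 n B1 x0"
proof -
  obtain \<delta> \<psi> where \<delta>: "affine_on m1 n B1 \<delta>" and \<Phi>: "\<forall>x\<in>B1. \<forall>y\<in>B2. \<Phi> (join m1 x y) = \<delta> x + \<psi> y"
    using assms unfolding affine_on_prod_set_iff by blast
  have aff: "affine_on m1 n B1 (fst_part \<Phi>)"
  proof (rule affine_on_cong[OF affine_on_add_const[OF \<delta> vecs_uminus]])
    show "\<delta> x0 \<in> vecs n"
      using \<delta> x0 by (rule affine_on_in_vecs)
    show "\<delta> x + - \<delta> x0 = fst_part \<Phi> x" if "x \<in> B1" for x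
      using that x0 y0 \<Phi> by (simp add: fst_part_def)
  qed
  have "fst_part \<Phi> x \<in> vecs n" if "x \<in> B1" for x
    using aff that by (rule affine_on_in_vecs)
  with aff x0 show ?thesis
    unfolding pointed_homs_def aff_homs_def by (simp add: fst_part_def restrict_PiE_iff)
qed

lemma snd_part_in_aff_homs:
  assumes \<Phi>: "\<Phi> \<in> aff_homs (m1 + m2) n (prod_set m1 B1 B2) A"
  shows "snd_part \<Phi> \<in> aff_homs m2 n B2 (shifts_into n (fst_part \<Phi> ` B1) A)"
proof -
  have \<Phi>_aff: "affine_on (m1 + m2) n (prod_set m1 B1 B2) \<Phi>" and \<Phi>_A: "\<Phi> \<in> prod_set m1 B1 B2 \<rightarrow>\<^sub>E A"
    using \<Phi> unfolding aff_homs_def by blast+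
  obtain \<delta> \<psi> where \<delta>: "affine_on m1 n B1 \<delta>" and \<psi>: "affine_on m2 n B2 \<psi>"
    and \<Phi>_eq: "\<forall>x\<in>B1. \<forall>y\<in>B2. \<Phi> (join m1 x y) = \<delta> x + \<psi> y"
    using \<Phi>_aff unfolding affine_on_prod_set_iff by blast
  have aff: "affine_on m2 n B2 (snd_part \<Phi>)"
  proof (rule affine_on_cong[OF affine_on_add_const[OF \<psi>]])
    show "\<delta> x0 \<in> vecs n"
      using \<delta> x0 by (rule affine_on_in_vecs)
    show "\<psi> y + \<delta> x0 = snd_part \<Phi> y" if "y \<in> B2" for y
      using that x0 \<Phi>_eq by (simp add: snd_part_def add.commute)
  qed
  moreover have "snd_part \<Phi> y \<in> shifts_into n (fst_part \<Phi> ` B1) A" if "y \<in> B2" for y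
  proof -
    have "snd_part \<Phi> y + fst_part \<Phi> x \<in> A" if "x \<in> B1" for x
    proof -
      have "\<Phi> (join m1 x y) \<in> A"
        using \<Phi>_A join_in_prod_set[OF that \<open>y \<in> B2\<close>] by (rule PiE_mem)
      then show ?thesis
        using affine_on_prod_set_split[OF \<Phi>_aff that \<open>y \<in> B2\<close>] by (simp add: add.commute)
    qed
    then show ?thesis
      unfolding shifts_into_def using affine_on_in_vecs[OF aff that] by blast
  qed
  ultimately show ?thesis
    unfolding aff_homs_def by (simp add: snd_part_def restrict_PiE_iff)
qed

lemma glue_in_aff_homs:
  assumes \<delta>: "\<delta> \<in> pointed_homs m1 n B1 x0" and \<psi>: "\<psi> \<in> aff_homs m2 n B2 (shifts_into n (\<delta> ` B1) A)"
  shows "glue \<delta> \<psi> \<in> aff_homs (m1 + m2) n (prod_set m1 B1 B2) A"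
proof -
  have "affine_on m1 n B1 \<delta>" "affine_on m2 n B2 \<psi>" and \<psi>_shifts: "\<And>y. y \<in> B2 \<Longrightarrow> \<psi> y \<in> shifts_into n (\<delta> ` B1) A"
    using \<delta> \<psi> unfolding pointed_homs_def aff_homs_def by auto
  then have "affine_on (m1 + m2) n (prod_set m1 B1 B2) (glue \<delta> \<psi>)"
    unfolding affine_on_prod_set_iff using glue_join by blast
  moreover have "glue \<delta> \<psi> p \<in> A" if p: "p \<in> prod_set m1 B1 B2" for p
  proof -
    obtain x y where "x \<in> B1" "y \<in> B2" "p = join m1 x y"
      using p by (rule prod_setE)
    then show ?thesis
      using \<psi>_shifts[of y] unfolding shifts_into_def by (simp add: glue_join add.commute)
  qed
  ultimately show ?thesis
    unfolding aff_homs_def glue_def by (simp add: restrict_PiE_iff)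
qed

lemma glue_parts:
  assumes "\<Phi> \<in> aff_homs (m1 + m2) n (prod_set m1 B1 B2) A"
  shows "glue (fst_part \<Phi>) (snd_part \<Phi>) = \<Phi>"
proof -
  have \<Phi>: "\<Phi> \<in> extensional (prod_set m1 B1 B2)" "affine_on (m1 + m2) n (prod_set m1 B1 B2) \<Phi>"
    using assms unfolding aff_homs_def by (auto simp: PiE_iff)
  show ?thesis
  proof (rule extensionalityI[OF _ \<Phi>(1)])
    show "glue (fst_part \<Phi>) (snd_part \<Phi>) \<in> extensional (prod_set m1 B1 B2)"
      by (simp add: glue_def)
    fix p assume "p \<in> prod_set m1 B1 B2"
    then obtain x y where "x \<in> B1" "y \<in> B2" "p = join m1 x y"
      by (rule prod_setE)
    then show "glue (fst_part \<Phi>) (snd_part \<Phi>) p = \<Phi> p"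
      using affine_on_prod_set_split[OF \<Phi>(2)] by (simp add: glue_join)
  qed
qed

lemma fst_part_glue:
  assumes "\<delta> \<in> pointed_homs m1 n B1 x0"
  shows "fst_part (glue \<delta> \<psi>) = \<delta>"
proof -
  have "\<delta> \<in> extensional B1" "\<delta> x0 = 0"
    using assms unfolding pointed_homs_def aff_homs_def by (auto simp: PiE_iff)
  then show ?thesis
    using x0 y0 by (intro extensionalityI[of _ B1]) (simp_all add: fst_part_def glue_join)
qed

lemma snd_part_glue:
  assumes "\<delta> \<in> pointed_homs m1 n B1 x0" "\<psi> \<in> extensional B2"
  shows "snd_part (glue \<delta> \<psi>) = \<psi>"
proof -
  have "\<delta> x0 = 0"
    using assms(1) unfolding pointed_homs_def by blast
  with assms(2) show ?thesis
    using x0 by (intro extensionalityI[of _ B2]) (simp_all add: snd_part_def glue_join)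
qed

lemma bij_betw_parts:
  "bij_betw (\<lambda>\<Phi>. (fst_part \<Phi>, snd_part \<Phi>)) (aff_homs (m1 + m2) n (prod_set m1 B1 B2) A)
    (SIGMA \<delta>:pointed_homs m1 n B1 x0. aff_homs m2 n B2 (shifts_into n (\<delta> ` B1) A))"
proof (rule bij_betw_byWitness[where f' = "\<lambda>(\<delta>, \<psi>). glue \<delta> \<psi>"])
  show "\<forall>\<Phi>\<in>aff_homs (m1 + m2) n (prod_set m1 B1 B2) A. (case (fst_part \<Phi>, snd_part \<Phi>) of (\<delta>, \<psi>) \<Rightarrow> glue \<delta> \<psi>) = \<Phi>"
    using glue_parts by simp
  show "\<forall>q\<in>SIGMA \<delta>:pointed_homs m1 n B1 x0. aff_homs m2 n B2 (shifts_into n (\<delta> ` B1) A).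
      (fst_part (case q of (\<delta>, \<psi>) \<Rightarrow> glue \<delta> \<psi>), snd_part (case q of (\<delta>, \<psi>) \<Rightarrow> glue \<delta> \<psi>)) = q"
    using fst_part_glue snd_part_glue by (auto simp: aff_homs_def PiE_iff)
  show "(\<lambda>\<Phi>. (fst_part \<Phi>, snd_part \<Phi>)) ` aff_homs (m1 + m2) n (prod_set m1 B1 B2) A
      \<subseteq> (SIGMA \<delta>:pointed_homs m1 n B1 x0. aff_homs m2 n B2 (shifts_into n (\<delta> ` B1) A))"
  proof (rule image_subsetI)
    fix \<Phi> assume \<Phi>: "\<Phi> \<in> aff_homs (m1 + m2) n (prod_set m1 B1 B2) A"
    then have "fst_part \<Phi> \<in> pointed_homs m1 n B1 x0"
      unfolding aff_homs_def using fst_part_in_pointed_homs by blast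
    with snd_part_in_aff_homs[OF \<Phi>] show "(fst_part \<Phi>, snd_part \<Phi>)
        \<in> (SIGMA \<delta>:pointed_homs m1 n B1 x0. aff_homs m2 n B2 (shifts_into n (\<delta> ` B1) A))"
      by blast
  qed
  show "(\<lambda>(\<delta>, \<psi>). glue \<delta> \<psi>) ` (SIGMA \<delta>:pointed_homs m1 n B1 x0. aff_homs m2 n B2 (shifts_into n (\<delta> ` B1) A))
      \<subseteq> aff_homs (m1 + m2) n (prod_set m1 B1 B2) A"
    using glue_in_aff_homs by auto
qed

end

lemma card_aff_homs_prod_set:
  fixes B1 B2 :: "(nat \<Rightarrow> 'a::{finite,field}) set"
  assumes "B1 \<subseteq> vecs m1" "B2 \<subseteq> vecs m2" "x0 \<in> B1" "y0 \<in> B2"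
  shows "card (aff_homs (m1 + m2) n (prod_set m1 B1 B2) A) =
    (\<Sum>\<delta>\<in>pointed_homs m1 n B1 x0. card (aff_homs m2 n B2 (shifts_into n (\<delta> ` B1) A)))"
proof -
  interpret prod_decomposition m1 B1 B2 x0 y0
    using assms(1,3,4) by unfold_locales
  have "finite (pointed_homs m1 n B1 x0)"
    using finite_subset_vecs[OF assms(1)] by (rule finite_pointed_homs)
  moreover have "\<forall>\<delta>\<in>pointed_homs m1 n B1 x0. finite (aff_homs m2 n B2 (shifts_into n (\<delta> ` B1) A))"
    using finite_aff_homs[OF finite_subset_vecs[OF assms(2)]] by blast
  ultimately show ?thesis
    using bij_betw_same_card[OF bij_betw_parts] by (simp add: card_SigmaI)
qed

lemma card_aff_homs_eq_sum_shifts: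
  fixes B :: "(nat \<Rightarrow> 'a::{finite,field}) set"
  assumes "B \<subseteq> vecs m" "x0 \<in> B"
  shows "card (aff_homs m n B A) = (\<Sum>\<delta>\<in>pointed_homs m n B x0. card (shifts_into n (\<delta> ` B) A))"
proof -
  have "prod_set m B {0} = B"
    using assms(1) join_zero unfolding prod_set_eq_image_join by (force simp: subset_iff)
  moreover have "card (aff_homs 0 n {0} (shifts_into n D A)) = card (shifts_into n D A)" for D
    by (simp add: aff_homs_singleton shifts_into_def card_PiE)
  moreover have "{0} \<subseteq> (vecs 0 :: (nat \<Rightarrow> 'a) set)"
    using zero_in_vecs by blast
  ultimately show ?thesis
    using card_aff_homs_prod_set[OF assms(1) _ assms(2), where ?B2.0 = "{0}" and ?m2.0 = 0 and ?y0.0 = 0]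
    by simp
qed

section \<open>A power mean inequality\<close>

lemma convex_on_powr_nonneg:
  fixes p :: real
  assumes "1 \<le> p"
  shows "convex_on {0..} (\<lambda>x. x powr p)"
proof (rule convex_on_linorderI)
  fix t x y :: real
  assume t: "0 < t" "t < 1" and x: "x \<in> {0..}" and y: "y \<in> {0..}" and "x < y"
  show "((1 - t) *\<^sub>R x + t *\<^sub>R y) powr p \<le> (1 - t) * x powr p + t * y powr p"
  proof (cases "x = 0")
    case True
    have "t powr p \<le> t powr 1"
      using t assms by (intro powr_mono') auto
    then have "t powr p * y powr p \<le> t * y powr p"
      using t by (intro mult_right_mono) auto
    then show ?thesis
      using True t y assms by (simp add: powr_mult)
  next
    case False
    with x \<open>x < y\<close> have "x \<in> {0<..}" "y \<in> {0<..}"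
      by auto
    then show ?thesis
      using convex_onD[OF powr_convex[OF assms], of t x y] t by simp
  qed
qed (simp add: convex_real_interval)

lemma card_mul_powr_mean_le:
  fixes X :: "'b \<Rightarrow> real"
  assumes "finite D" "D \<noteq> {}" "\<And>d. d \<in> D \<Longrightarrow> 0 \<le> X d" "1 \<le> p"
  shows "real (card D) * ((\<Sum>d\<in>D. X d) / real (card D)) powr p \<le> (\<Sum>d\<in>D. X d powr p)"
proof -
  have l: "0 < real (card D)"
    using assms(1,2) by (simp add: card_gt_0_iff)
  have "(\<Sum>d\<in>D. (1 / real (card D)) *\<^sub>R X d) powr p \<le> (\<Sum>d\<in>D. (1 / real (card D)) * X d powr p)"
    using assms(1,2) convex_on_powr_nonneg[OF assms(4)] by (rule convex_on_sum) (use assms(1,3) l in auto)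
  then have "((\<Sum>d\<in>D. X d) / real (card D)) powr p \<le> (\<Sum>d\<in>D. X d powr p) / real (card D)"
    by (simp add: sum_divide_distrib)
  with l show ?thesis
    by (simp add: field_simps)
qed

lemma powr_sum_lower_bound:
  fixes X :: "'b \<Rightarrow> real"
  assumes D: "finite D" "D \<noteq> {}" and X: "\<And>d. d \<in> D \<Longrightarrow> 0 \<le> X d" and p: "1 \<le> p"
    and t: "0 \<le> t" and card_le: "real (card D) \<le> M" and sum_ge: "t * M \<le> (\<Sum>d\<in>D. X d)"
  shows "t powr p * M \<le> (\<Sum>d\<in>D. X d powr p)"
proof -
  define l where "l = real (card D)"
  have l: "0 < l"
    using D unfolding l_def by (simp add: card_gt_0_iff)
  have M: "1 \<le> M / l"
    using card_le l unfolding l_def by simp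
  have "t powr p * M = l * (t powr p * (M / l))"
    using l by simp
  also have "\<dots> \<le> l * (t powr p * (M / l) powr p)"
  proof -
    have "M / l = (M / l) powr 1"
      using M by (intro powr_one[symmetric]) linarith
    also have "\<dots> \<le> (M / l) powr p"
      using M p by (intro powr_mono) auto
    finally show ?thesis
      using l by (intro mult_left_mono) simp_all
  qed
  also have "\<dots> = l * (t * (M / l)) powr p"
    using t M by (simp only: powr_mult[of t "M / l"])
  also have "\<dots> \<le> l * ((\<Sum>d\<in>D. X d) / l) powr p"
    using l t M sum_ge p by (intro mult_left_mono powr_mono2) (simp_all add: field_simps)
  also have "\<dots> \<le> (\<Sum>d\<in>D. X d powr p)"
    unfolding l_def using D X p by (rule card_mul_powr_mean_le)
  finally show ?thesis .
qed

lemma hom_aff_empty: "hom_aff m n {} A = 1"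
  by (simp add: hom_aff_eq_card_aff_homs aff_homs_empty)

lemma weakly_sidorenkoD:
  fixes B :: "(nat \<Rightarrow> 'a::{finite,field}) set"
  assumes "weakly_sidorenko C m B" "A \<subseteq> vecs n"
  shows "(real (card A) / real (card (UNIV :: 'a set)) ^ n) powr C * (real (card (UNIV :: 'a set)) ^ n) ^ rank_aff B
    \<le> real (hom_aff m n B A)"
  using assms unfolding weakly_sidorenko_def Let_def by blast

text \<open>Testing the hypothesis with a single point of F^1 gives q^rank \<le> q^C.\<close>

lemma rank_aff_le_weakly_sidorenko:
  fixes B :: "(nat \<Rightarrow> 'a::{finite,field}) set"
  assumes "B \<subseteq> vecs m" "weakly_sidorenko C m B"
  shows "real (rank_aff B) \<le> C"
proof -
  define q where "q = real (card (UNIV :: 'a set))"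
  have q: "1 < q"
    using one_less_card_field unfolding q_def by simp
  have A: "{0} \<subseteq> (vecs 1 :: (nat \<Rightarrow> 'a) set)"
    using zero_in_vecs by blast
  have "hom_aff m 1 B {0} = card (B \<rightarrow>\<^sub>E {0 :: nat \<Rightarrow> 'a})"
    by (simp add: hom_aff_eq_card_aff_homs[OF assms(1)] aff_homs_to_singleton[OF zero_in_vecs])
  also have "\<dots> = 1"
    using finite_subset_vecs[OF assms(1)] by (simp add: card_PiE)
  finally have "(1 / q) powr C * q ^ rank_aff B \<le> 1"
    using weakly_sidorenkoD[OF assms(2) A] unfolding q_def by simp
  then have "q powr real (rank_aff B) \<le> q powr C"
    using q by (simp add: powr_divide powr_realpow field_simps)
  then show ?thesis
    using q by simp
qed

lemma one_le_weakly_sidorenko_exponent: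
  fixes B :: "(nat \<Rightarrow> 'a::{finite,field}) set"
  assumes "B \<subseteq> vecs m" "B \<noteq> {}" "weakly_sidorenko C m B"
  shows "1 \<le> C"
  using one_le_rank_aff[OF finite_subset_vecs[OF assms(1)] assms(2)]
    rank_aff_le_weakly_sidorenko[OF assms(1,3)] by linarith

lemma weakly_sidorenko_sum_shifts:
  fixes B :: "(nat \<Rightarrow> 'a::{finite,field}) set" and n :: nat
  defines "N \<equiv> real (card (UNIV :: 'a set)) ^ n"
  assumes B: "B \<subseteq> vecs m" "x0 \<in> B" and A: "A \<subseteq> vecs n" and ws: "weakly_sidorenko C m B"
  shows "(real (card A) / N) powr C * N ^ (rank_aff B - 1)
    \<le> (\<Sum>\<delta>\<in>pointed_homs m n B x0. real (card (shifts_into n (\<delta> ` B) A)) / N)"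
proof -
  have N: "1 \<le> N"
    unfolding N_def by (rule one_le_card_field_power)
  have "1 \<le> rank_aff B"
    using finite_subset_vecs[OF B(1)] B(2) by (intro one_le_rank_aff) auto
  then have N_rank: "N ^ rank_aff B = N * N ^ (rank_aff B - 1)"
    by (simp flip: power_Suc)
  have "(real (card A) / N) powr C * N ^ rank_aff B \<le> real (hom_aff m n B A)"
    using weakly_sidorenkoD[OF ws A] unfolding N_def .
  also have "\<dots> = N * (\<Sum>\<delta>\<in>pointed_homs m n B x0. real (card (shifts_into n (\<delta> ` B) A)) / N)"
    using card_aff_homs_eq_sum_shifts[OF B] N
    by (simp add: hom_aff_eq_card_aff_homs[OF B(1)] sum_distrib_left)
  finally show ?thesis
    using N by (simp add: N_rank)
qed

lemma sum_shifts_powr_lower_bound: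
  fixes B :: "(nat \<Rightarrow> 'a::{finite,field}) set" and n :: nat
  defines "N \<equiv> real (card (UNIV :: 'a set)) ^ n"
  assumes B: "B \<subseteq> vecs m" and S: "S \<subseteq> B" "card S = rank_aff B" "x0 \<in> S"
    and span: "\<And>x. x \<in> B \<Longrightarrow> weighted_comb S 1 x"
    and A: "A \<subseteq> vecs n" and ws: "weakly_sidorenko C m B" and p: "1 \<le> p"
  shows "(real (card A) / N) powr (C * p) * N ^ (rank_aff B - 1)
    \<le> (\<Sum>\<delta>\<in>pointed_homs m n B x0. (real (card (shifts_into n (\<delta> ` B) A)) / N) powr p)"
proof -
  define \<Delta> where "\<Delta> = pointed_homs m n B x0"
  define X where "X \<delta> = real (card (shifts_into n (\<delta> ` B) A)) / N" for \<delta>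
  have N: "1 \<le> N"
    unfolding N_def by (rule one_le_card_field_power)
  have "finite \<Delta>" "\<Delta> \<noteq> {}"
    unfolding \<Delta>_def using finite_pointed_homs[OF finite_subset_vecs[OF B]]
      restrict_zero_in_pointed_homs[OF subsetD[OF S(1,3)]] by blast+
  moreover have "0 \<le> X \<delta>" for \<delta>
    unfolding X_def using N by simp
  moreover have "real (card \<Delta>) \<le> N ^ (rank_aff B - 1)"
    using card_pointed_homs_le[OF S(1) finite_subset[OF S(1) finite_subset_vecs[OF B]] S(3) span]
    unfolding \<Delta>_def N_def S(2) by (simp add: card_vecs flip: of_nat_power)
  moreover have "(real (card A) / N) powr C * N ^ (rank_aff B - 1) \<le> (\<Sum>\<delta>\<in>\<Delta>. X \<delta>)"
    using weakly_sidorenko_sum_shifts[OF B subsetD[OF S(1,3)] A ws] unfolding \<Delta>_def X_def N_def .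
  ultimately have "((real (card A) / N) powr C) powr p * N ^ (rank_aff B - 1) \<le> (\<Sum>\<delta>\<in>\<Delta>. X \<delta> powr p)"
    using p by (intro powr_sum_lower_bound) simp_all
  then show ?thesis
    unfolding \<Delta>_def X_def by (simp add: powr_powr)
qed

lemma hom_aff_prod_set_lower_bound:
  fixes B1 B2 :: "(nat \<Rightarrow> 'a::{finite,field}) set" and n :: nat
  defines "N \<equiv> real (card (UNIV :: 'a set)) ^ n"
  assumes B1: "B1 \<subseteq> vecs m1" "B1 \<noteq> {}" and B2: "B2 \<subseteq> vecs m2" "B2 \<noteq> {}" and A: "A \<subseteq> vecs n"
    and ws1: "weakly_sidorenko C1 m1 B1" and ws2: "weakly_sidorenko C2 m2 B2"
  shows "(real (card A) / N) powr (C1 * C2) * N ^ rank_aff (prod_set m1 B1 B2)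
    \<le> real (hom_aff (m1 + m2) n (prod_set m1 B1 B2) A)"
proof -
  define \<alpha> where "\<alpha> = real (card A) / N"
  define r1 r2 where "r1 = rank_aff B1" and "r2 = rank_aff B2"
  define X where "X \<delta> = real (card (shifts_into n (\<delta> ` B1) A)) / N" for \<delta>
  obtain S1 where S1: "S1 \<subseteq> B1" "card S1 = r1" and span1: "\<And>x. x \<in> B1 \<Longrightarrow> weighted_comb S1 1 x"
    using rank_aff_basis[OF finite_subset_vecs[OF B1(1)]] unfolding r1_def by blast
  obtain x0 y0 where x0: "x0 \<in> S1" and y0: "y0 \<in> B2"
    using B1(2) B2(2) span1 weighted_comb_nonempty by blast
  define \<Delta> where "\<Delta> = pointed_homs m1 n B1 x0"
  have N: "1 \<le> N"
    unfolding N_def by (rule one_le_card_field_power)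
  have "\<alpha> powr (C1 * C2) * N ^ rank_aff (prod_set m1 B1 B2) \<le> \<alpha> powr (C1 * C2) * N ^ (r1 - 1 + r2)"
    using rank_aff_prod_set_le[OF finite_subset_vecs[OF B1(1)] finite_subset_vecs[OF B2(1)] B1(2) B2(2)]
      one_le_rank_aff[OF finite_subset_vecs[OF B1(1)] B1(2)] N
    unfolding r1_def r2_def by (intro mult_left_mono power_increasing) simp_all
  also have "\<dots> = \<alpha> powr (C1 * C2) * N ^ (r1 - 1) * N ^ r2"
    by (simp add: power_add)
  also have "\<dots> \<le> (\<Sum>\<delta>\<in>\<Delta>. X \<delta> powr C2) * N ^ r2"
    using sum_shifts_powr_lower_bound[OF B1(1) S1(1) _ x0 span1 A ws1 one_le_weakly_sidorenko_exponent[OF B2 ws2]] S1(2) N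
    unfolding \<alpha>_def \<Delta>_def X_def N_def r1_def by (intro mult_right_mono) simp_all
  also have "\<dots> = (\<Sum>\<delta>\<in>\<Delta>. X \<delta> powr C2 * N ^ r2)"
    by (rule sum_distrib_right)
  also have "\<dots> \<le> (\<Sum>\<delta>\<in>\<Delta>. real (hom_aff m2 n B2 (shifts_into n (\<delta> ` B1) A)))"
    using weakly_sidorenkoD[OF ws2 shifts_into_subset_vecs] unfolding X_def N_def r2_def
    by (intro sum_mono) simp
  also have "\<dots> = real (hom_aff (m1 + m2) n (prod_set m1 B1 B2) A)"
    using card_aff_homs_prod_set[OF B1(1) B2(1) subsetD[OF S1(1) x0] y0]
    by (simp add: hom_aff_eq_card_aff_homs[OF prod_set_subset_vecs[OF B1(1) B2(1)]]
        hom_aff_eq_card_aff_homs[OF B2(1)] \<Delta>_def)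
  finally show ?thesis
    unfolding \<alpha>_def .
qed

lemma weakly_sidorenko_prod_set:
  fixes B1 B2 :: "(nat \<Rightarrow> 'a::{finite,field}) set"
  assumes B1: "B1 \<subseteq> vecs m1" and B2: "B2 \<subseteq> vecs m2"
    and ws1: "weakly_sidorenko C1 m1 B1" and ws2: "weakly_sidorenko C2 m2 B2"
  shows "weakly_sidorenko (C1 * C2) (m1 + m2) (prod_set m1 B1 B2)"
  unfolding weakly_sidorenko_def Let_def
proof (intro allI impI)
  fix n and A :: "(nat \<Rightarrow> 'a) set"
  assume A: "A \<subseteq> vecs n"
  define N where "N = real (card (UNIV :: 'a set)) ^ n"
  have N1: "1 \<le> N"
    unfolding N_def by (rule one_le_card_field_power)
  show "(real (card A) / N) powr (C1 * C2) * N ^ rank_aff (prod_set m1 B1 B2)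
    \<le> real (hom_aff (m1 + m2) n (prod_set m1 B1 B2) A)"
  proof (cases "B1 = {} \<or> B2 = {}")
    case True
    then have empty: "prod_set m1 B1 B2 = {}"
      by (auto simp: prod_set_eq_image_join)
    have "real (card A) \<le> N"
      using card_mono[OF finite_vecs A] unfolding N_def by (simp add: card_vecs)
    moreover have "0 \<le> C1" "0 \<le> C2"
      using rank_aff_le_weakly_sidorenko[OF B1 ws1] rank_aff_le_weakly_sidorenko[OF B2 ws2] by simp_all
    ultimately have "(real (card A) / N) powr (C1 * C2) \<le> 1"
      using N1 by (intro powr_le1) simp_all
    then show ?thesis
      by (simp add: empty rank_aff_empty hom_aff_empty)
  next
    case False
    then show ?thesis
      unfolding N_def using hom_aff_prod_set_lower_bound[OF B1 _ B2 _ A ws1 ws2] by blast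
  qed
qed

theorem theorem1p12:
  fixes B1 B2 :: "(nat \<Rightarrow> 'a::{finite,field}) set" and m1 m2 :: nat
  assumes "B1 \<subseteq> vecs m1" and "B2 \<subseteq> vecs m2"
  shows "(\<forall>C1 C2. weakly_sidorenko C1 m1 B1 \<and> weakly_sidorenko C2 m2 B2 \<longrightarrow>
            weakly_sidorenko (C1 * C2) (m1 + m2) (prod_set m1 B1 B2))
       \<and> (sidorenko m1 B1 \<and> sidorenko m2 B2 \<longrightarrow> sidorenko (m1 + m2) (prod_set m1 B1 B2))"
proof (intro conjI allI impI)
  fix C1 C2
  assume "weakly_sidorenko C1 m1 B1 \<and> weakly_sidorenko C2 m2 B2"
  then show "weakly_sidorenko (C1 * C2) (m1 + m2) (prod_set m1 B1 B2)"
    using weakly_sidorenko_prod_set[OF assms] by blast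
next
  assume "sidorenko m1 B1 \<and> sidorenko m2 B2"
  then have "weakly_sidorenko (real (card B1) * real (card B2)) (m1 + m2) (prod_set m1 B1 B2)"
    unfolding sidorenko_def using weakly_sidorenko_prod_set[OF assms] by blast
  then show "sidorenko (m1 + m2) (prod_set m1 B1 B2)"
    unfolding sidorenko_def using card_prod_set[OF assms(1)] by simp
qed

end
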